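(* Fix $\alpha\in[0,1)$. Let $M=(r,q,u)$ and $\tilde M=(\tilde r,\tilde q,\tilde u)$ be floor-randomized, left-continuous mechanisms satisfying DD, and suppose $\tilde M$ dominates $M$. Let $D=\{\theta\in\Theta:\tilde q(\theta)\tilde r(\theta)>q(\theta)r(\theta)\}$. Then $u(\theta)>\tilde u(\theta)$ for every $\theta\in D$.
   Context: Setting. Let $\Theta=[\underline\theta,\overline\theta]$ with $0<\underline\theta<\overline\theta$. Let $c>0$ and let $P:\mathbb R_+\to\mathbb R_+$ be continuous and strictly decreasing with $P(\overline q)=0$ for some $\overline q>0$. Put $V(q)=\int_0^q P(z)\,dz$ and $\mathrm{TS}(\theta,q)=V(q)-c-\theta q$ for $q>0$, $\mathrm{TS}(\theta,0)=0$. Assume (A2): $\mathrm{TS}(\overline\theta,P^{-1}(\overline\theta))>0$. A mechanism is a triple $M=(r,q,u)$ of functions $r:\Theta\to[0,1]$, $q:\Theta\to[0,\overline q]$, $u:\Theta\to\mathbb R$ with $q(\theta)=0$ if and only if $r(\theta)=0$. It is IC if $u(\theta)\ge u(\theta')+(\theta'-\theta)q(\theta')r(\theta')$ for all $\theta,\theta'\in\Theta$, and IR if $u(\theta)\ge 0$ for all $\theta$. (Known fact: $M$ is IC iff $\theta\mapsto q(\theta)r(\theta)$ is nonincreasing and $u(\theta)=u(\overline\theta)+\int_\theta^{\overline\theta}q(z)r(z)\,dz$ for all $\theta$; an IC mechanism is IR iff $u(\overline\theta)\ge0$.) The regulator's surplus at $\theta$ is $\mathrm{RS}_\alpha(\theta,M)=r(\theta)\,\mathrm{TS}(\theta,q(\theta))-(1-\alpha)u(\theta)$.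 An IC and IR mechanism $\tilde M$ dominates an IC and IR mechanism $M$ if $\mathrm{RS}_\alpha(\theta,\tilde M)\ge \mathrm{RS}_\alpha(\theta,M)$ for all $\theta\in\Theta$ with strict inequality for some $\theta$. The quantity floor $\hat q$ is the unique $q>0$ with $V(q)-qP(q)=c$. A mechanism $(r,q,u)$ is floor-randomized if it is IC, IR, $u(\overline\theta)=0$, and $\Theta$ can be partitioned into three pairwise disjoint (possibly empty) intervals $\Theta_1,\Theta_{01},\Theta_0$, with every element of $\Theta_0$ larger than every element of $\Theta_{01}$ and every element of $\Theta_{01}$ larger than every element of $\Theta_1$, such that: $q(\theta)\ge\hat q$ and $r(\theta)=1$ for $\theta\in\Theta_1$; $q(\theta)=\hat q$ and $r(\theta)\in(0,1)$ for $\theta\in\Theta_{01}$; $q(\theta)=r(\theta)=0$ for $\theta\in\Theta_0$. The efficient quantity is $q_e(\theta)=P^{-1}(\theta)$. A mechanism satisfies downward distortion (DD) if $q(\theta)\le q_e(\theta)$ for all $\theta$, with equality at $\theta=\underline\theta$. A mechanism is left continuous if $\theta\mapsto q(\theta)r(\theta)$ is left continuous at every $\theta\in(\underline\theta,\overline\theta]$. *)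

theory Defs
  imports "HOL-Analysis.Analysis"
begin

definition V :: "(real \<Rightarrow> real) \<Rightarrow> real \<Rightarrow> real" where
  "V P q = integral {0..q} P"

definition TS :: "(real \<Rightarrow> real) \<Rightarrow> real \<Rightarrow> real \<Rightarrow> real \<Rightarrow> real" where
  "TS P c \<theta> q = (if q = 0 then 0 else V P q - c - \<theta> * q)"

definition qhat :: "(real \<Rightarrow> real) \<Rightarrow> real \<Rightarrow> real" where
  "qhat P c = (THE q. q > 0 \<and> V P q - q * P q = c)"

definition qe :: "(real \<Rightarrow> real) \<Rightarrow> real \<Rightarrow> real" where
  "qe P \<theta> = (THE z. z \<ge> 0 \<and> P z = \<theta>)"

definition mechanism ::
  "real \<Rightarrow> real \<Rightarrow> real \<Rightarrow> (real \<Rightarrow> real) \<Rightarrow> (real \<Rightarrow> real) \<Rightarrow> (real \<Rightarrow> real) \<Rightarrow> bool" where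
  "mechanism tlo thi qbar r q u \<longleftrightarrow>
     (\<forall>\<theta>\<in>{tlo..thi}. 0 \<le> r \<theta> \<and> r \<theta> \<le> 1 \<and> 0 \<le> q \<theta> \<and> q \<theta> \<le> qbar
                    \<and> (q \<theta> = 0 \<longleftrightarrow> r \<theta> = 0))"

definition IC :: "real \<Rightarrow> real \<Rightarrow> (real \<Rightarrow> real) \<Rightarrow> (real \<Rightarrow> real) \<Rightarrow> (real \<Rightarrow> real) \<Rightarrow> bool" where
  "IC tlo thi r q u \<longleftrightarrow>
     (\<forall>\<theta>\<in>{tlo..thi}. \<forall>\<theta>'\<in>{tlo..thi}. u \<theta> \<ge> u \<theta>' + (\<theta>' - \<theta>) * q \<theta>' * r \<theta>')"

definition IR :: "real \<Rightarrow> real \<Rightarrow> (real \<Rightarrow> real) \<Rightarrow> bool" where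
  "IR tlo thi u \<longleftrightarrow> (\<forall>\<theta>\<in>{tlo..thi}. u \<theta> \<ge> 0)"

definition RS ::
  "(real \<Rightarrow> real) \<Rightarrow> real \<Rightarrow> real \<Rightarrow> real \<Rightarrow> (real \<Rightarrow> real) \<Rightarrow> (real \<Rightarrow> real) \<Rightarrow> (real \<Rightarrow> real) \<Rightarrow> real" where
  "RS P c \<alpha> \<theta> r q u = r \<theta> * TS P c \<theta> (q \<theta>) - (1 - \<alpha>) * u \<theta>"

definition dominates ::
  "(real \<Rightarrow> real) \<Rightarrow> real \<Rightarrow> real \<Rightarrow> real \<Rightarrow> real \<Rightarrow> real \<Rightarrow>
   (real \<Rightarrow> real) \<Rightarrow> (real \<Rightarrow> real) \<Rightarrow> (real \<Rightarrow> real) \<Rightarrow>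
   (real \<Rightarrow> real) \<Rightarrow> (real \<Rightarrow> real) \<Rightarrow> (real \<Rightarrow> real) \<Rightarrow> bool" where
  "dominates P c \<alpha> tlo thi qbar rt qt ut r q u \<longleftrightarrow>
     mechanism tlo thi qbar rt qt ut \<and> IC tlo thi rt qt ut \<and> IR tlo thi ut \<and>
     mechanism tlo thi qbar r q u \<and> IC tlo thi r q u \<and> IR tlo thi u \<and>
     (\<forall>\<theta>\<in>{tlo..thi}. RS P c \<alpha> \<theta> rt qt ut \<ge> RS P c \<alpha> \<theta> r q u) \<and>
     (\<exists>\<theta>\<in>{tlo..thi}. RS P c \<alpha> \<theta> rt qt ut > RS P c \<alpha> \<theta> r q u)"

definition floor_randomized ::
  "(real \<Rightarrow> real) \<Rightarrow> real \<Rightarrow> real \<Rightarrow> real \<Rightarrow> real \<Rightarrow>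
   (real \<Rightarrow> real) \<Rightarrow> (real \<Rightarrow> real) \<Rightarrow> (real \<Rightarrow> real) \<Rightarrow> bool" where
  "floor_randomized P c tlo thi qbar r q u \<longleftrightarrow>
     mechanism tlo thi qbar r q u \<and> IC tlo thi r q u \<and> IR tlo thi u \<and> u thi = 0 \<and>
     (\<exists>T1 T01 T0 :: real set.
        is_interval T1 \<and> is_interval T01 \<and> is_interval T0 \<and>
        T1 \<union> T01 \<union> T0 = {tlo..thi} \<and>
        T1 \<inter> T01 = {} \<and> T1 \<inter> T0 = {} \<and> T01 \<inter> T0 = {} \<and>
        (\<forall>x\<in>T0. \<forall>y\<in>T01. x > y) \<and> (\<forall>x\<in>T01. \<forall>y\<in>T1. x > y) \<and> (\<forall>x\<in>T0. \<forall>y\<in>T1. x > y) \<and>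
        (\<forall>\<theta>\<in>T1. q \<theta> \<ge> qhat P c \<and> r \<theta> = 1) \<and>
        (\<forall>\<theta>\<in>T01. q \<theta> = qhat P c \<and> 0 < r \<theta> \<and> r \<theta> < 1) \<and>
        (\<forall>\<theta>\<in>T0. q \<theta> = 0 \<and> r \<theta> = 0))"

definition DD :: "(real \<Rightarrow> real) \<Rightarrow> real \<Rightarrow> real \<Rightarrow> (real \<Rightarrow> real) \<Rightarrow> bool" where
  "DD P tlo thi q \<longleftrightarrow> (\<forall>\<theta>\<in>{tlo..thi}. q \<theta> \<le> qe P \<theta>) \<and> q tlo = qe P tlo"

definition left_continuous :: "real \<Rightarrow> real \<Rightarrow> (real \<Rightarrow> real) \<Rightarrow> (real \<Rightarrow> real) \<Rightarrow> bool" where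
  "left_continuous tlo thi r q \<longleftrightarrow>
     (\<forall>\<theta>\<in>{tlo<..thi}. continuous (at_left \<theta>) (\<lambda>t. q t * r t))"

end

theory Submission
  imports Defs
begin

text \<open>Write Q = q r for the expected quantity. Where the dominated mechanism M sells more than
  M-tilde, the floor-randomized structure (randomization only at the floor qhat, from which total
  surplus increases up to the efficient quantity) gives M at least as much surplus, so domination
  forces u \<ge> ut there. Given \<theta> with Qt \<theta> > Q \<theta>, go down to the last type e below \<theta> where
  M sells more, or to the lowest type, where DD and strict domination exclude a gap. By the
  envelope formula u s - u t = integral of Q over [s, t], the rent difference u - ut grows on
  (e, \<theta>] at rate Qt - Q \<ge> 0, strictly so just below \<theta> by left continuity; hence
  u \<theta> - ut \<theta> > u e - ut e \<ge> 0.\<close>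

lemma integral_ge_const_mult:
  fixes f :: "real \<Rightarrow> real"
  assumes "a \<le> b" "continuous_on {a..b} f" "\<And>z. z \<in> {a..b} \<Longrightarrow> k \<le> f z"
  shows "k * (b - a) \<le> integral {a..b} f"
proof -
  have "integral {a..b} (\<lambda>_. k) \<le> integral {a..b} f"
    by (rule integral_le) (use assms integrable_continuous_real in auto)
  then show ?thesis using assms(1) by (simp add: mult.commute)
qed

locale demand =
  fixes P :: "real \<Rightarrow> real" and qbar :: real
  assumes P_cont: "continuous_on {0..} P"
    and P_decreasing: "\<forall>x\<in>{0..}. \<forall>y\<in>{0..}. x < y \<longrightarrow> P y < P x"
    and P_qbar: "P qbar = 0"
    and qbar_pos: "0 < qbar"
begin

lemma P_less: "0 \<le> x \<Longrightarrow> x < y \<Longrightarrow> P y < P x"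
  using P_decreasing by auto

lemma P_le: "0 \<le> x \<Longrightarrow> x \<le> y \<Longrightarrow> P y \<le> P x"
  using P_less by (cases "x = y") (auto simp: less_imp_le)

lemma P_integrable: "0 \<le> a \<Longrightarrow> P integrable_on {a..b}"
  by (intro integrable_continuous_real continuous_on_subset[OF P_cont]) auto

lemma V_diff:
  assumes "0 \<le> a" "a \<le> b"
  shows "V P b - V P a = integral {a..b} P"
proof -
  have "integral {0..a} P + integral {a..b} P = integral {0..b} P"
    by (rule Henstock_Kurzweil_Integration.integral_combine) (use assms P_integrable in auto)
  then show ?thesis unfolding V_def by simp
qed

lemma continuous_on_V: "continuous_on {0..b} (V P)"
  using indefinite_integral_continuous_1[OF P_integrable[of 0 b]] unfolding V_def by simp

lemma qe_eqI:
  assumes "0 \<le> z" "P z = \<theta>"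
  shows "qe P \<theta> = z"
  unfolding qe_def
proof (rule the_equality)
  fix y assume y: "0 \<le> y \<and> P y = \<theta>"
  show "y = z"
    using P_less[of y z] P_less[of z y] y assms by (cases y z rule: linorder_cases) auto
qed (use assms in simp)

lemma qe_root:
  assumes "0 \<le> \<theta>" "\<theta> \<le> P 0"
  shows "0 \<le> qe P \<theta>" "P (qe P \<theta>) = \<theta>"
proof -
  obtain z where "0 \<le> z" "P z = \<theta>"
    using IVT2'[of P qbar \<theta> 0] continuous_on_subset[OF P_cont] assms P_qbar qbar_pos by auto
  then show "0 \<le> qe P \<theta>" "P (qe P \<theta>) = \<theta>" using qe_eqI by auto
qed

lemma qe_pos: "0 \<le> \<theta> \<Longrightarrow> \<theta> < P 0 \<Longrightarrow> 0 < qe P \<theta>"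
  using qe_root[of \<theta>] by (cases "qe P \<theta> = 0") auto

lemma qe_less:
  assumes "0 \<le> \<theta>" "\<theta> < \<theta>'" "\<theta>' \<le> P 0"
  shows "qe P \<theta>' < qe P \<theta>"
proof (rule ccontr)
  assume "\<not> qe P \<theta>' < qe P \<theta>"
  then have "P (qe P \<theta>') \<le> P (qe P \<theta>)"
    using P_le[of "qe P \<theta>" "qe P \<theta>'"] qe_root(1)[of \<theta>] assms by simp
  then show False
    using qe_root(2)[of \<theta>] qe_root(2)[of \<theta>'] assms by simp
qed

lemma le_P_below_qe:
  assumes "0 \<le> \<theta>" "\<theta> \<le> P 0" "0 \<le> z" "z \<le> qe P \<theta>"
  shows "\<theta> \<le> P z"
  using P_le[of z "qe P \<theta>"] qe_root[of \<theta>] assms by simp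

lemma TS_mono:
  assumes "0 < a" "a \<le> b" "\<And>z. z \<in> {a..b} \<Longrightarrow> \<theta> \<le> P z"
  shows "TS P c \<theta> a \<le> TS P c \<theta> b"
proof -
  have "\<theta> * (b - a) \<le> integral {a..b} P"
    using assms by (intro integral_ge_const_mult continuous_on_subset[OF P_cont]) auto
  then show ?thesis
    using V_diff[of a b] assms unfolding TS_def by (simp add: algebra_simps)
qed

lemma V_minus_revenue_strict_mono:
  assumes "0 < a" "a < b"
  shows "V P a - a * P a < V P b - b * P b"
proof -
  have "P b * (b - a) \<le> integral {a..b} P"
    using assms P_le by (intro integral_ge_const_mult continuous_on_subset[OF P_cont]) auto
  moreover have "a * P b < a * P a"
    using P_less[of a b] assms by simp
  ultimately show ?thesis
    using V_diff[of a b] assms by argo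
qed

lemma qhat_characterization:
  assumes "0 < c" "0 \<le> \<theta>" "\<theta> \<le> P 0" "0 < TS P c \<theta> (qe P \<theta>)"
  shows "0 < qhat P c" "V P (qhat P c) - qhat P c * P (qhat P c) = c"
proof -
  define z where "z = qe P \<theta>"
  have z: "0 \<le> z" "P z = \<theta>" "z \<noteq> 0"
    using qe_root[OF assms(2,3)] assms(4) unfolding z_def TS_def by auto
  then have "c \<le> V P z - z * P z"
    using assms(4) unfolding TS_def z_def[symmetric] by (simp add: algebra_simps)
  moreover have "continuous_on {0..z} (\<lambda>q. V P q - q * P q)"
    using continuous_on_V continuous_on_subset[OF P_cont] by (intro continuous_intros) auto
  ultimately obtain q0 where q0: "0 \<le> q0" "V P q0 - q0 * P q0 = c"
    using IVT'[of "\<lambda>q. V P q - q * P q" 0 c z] assms(1) z(1) by (auto simp: V_def)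
  then have q0_pos: "0 < q0"
    using assms(1) by (cases "q0 = 0") (auto simp: V_def)
  have "qhat P c = q0"
    unfolding qhat_def
  proof (rule the_equality)
    fix y assume "0 < y \<and> V P y - y * P y = c"
    then show "y = q0"
      using V_minus_revenue_strict_mono[of y q0] V_minus_revenue_strict_mono[of q0 y] q0 q0_pos
      by (cases y q0 rule: linorder_cases) auto
  qed (use q0 q0_pos in simp)
  then show "0 < qhat P c" "V P (qhat P c) - qhat P c * P (qhat P c) = c"
    using q0 q0_pos by simp_all
qed

end

lemma IC_utility_bounds:
  assumes "IC tlo thi r q u" "s \<in> {tlo..thi}" "t \<in> {tlo..thi}"
  shows "q t * r t * (t - s) \<le> u s - u t" "u s - u t \<le> q s * r s * (t - s)"
proof -
  have "u s \<ge> u t + (t - s) * q t * r t" "u t \<ge> u s + (s - t) * q s * r s"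
    using assms unfolding IC_def by blast+
  then show "q t * r t * (t - s) \<le> u s - u t" "u s - u t \<le> q s * r s * (t - s)"
    by (simp_all add: algebra_simps)
qed

lemma IC_utility_lipschitz:
  assumes "mechanism tlo thi qbar r q u" "IC tlo thi r q u" "0 \<le> qbar"
  shows "qbar-lipschitz_on {tlo..thi} u"
proof (rule lipschitz_onI)
  have Q_le: "0 \<le> q x * r x \<and> q x * r x \<le> qbar" if "x \<in> {tlo..thi}" for x
  proof -
    have "0 \<le> r x" "r x \<le> 1" "0 \<le> q x" "q x \<le> qbar"
      using assms(1) that unfolding mechanism_def by auto
    then show ?thesis
      using mult_left_le[of "r x" "q x"] by simp
  qed
  have ordered: "\<bar>u s - u t\<bar> \<le> qbar * (t - s)" if st: "s \<in> {tlo..thi}" "t \<in> {tlo..thi}" "s \<le> t" for s t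
  proof -
    have "0 \<le> q t * r t * (t - s)" "q s * r s * (t - s) \<le> qbar * (t - s)"
      using Q_le[OF st(1)] Q_le[OF st(2)] st(3) by (simp_all add: mult_right_mono)
    then show ?thesis
      using IC_utility_bounds[OF assms(2) st(1,2)] by (simp add: abs_le_iff)
  qed
  then show "dist (u s) (u t) \<le> qbar * dist s t" if "s \<in> {tlo..thi}" "t \<in> {tlo..thi}" for s t
    using that ordered[of s t] ordered[of t s] by (cases s t rule: le_cases) (auto simp: dist_real_def abs_minus_commute)
qed (use assms in simp)

lemma IC_rent_gap_step:
  assumes "IC tlo thi r q u" "IC tlo thi rt qt ut" "s \<in> {tlo..thi}" "t \<in> {tlo..thi}" "s \<le> t"
    and "\<eta> \<le> qt t * rt t - q t * r t"
  shows "(u s - ut s) - (u t - ut t) \<le> (q s * r s - q t * r t) * (t - s) - \<eta> * (t - s)"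
proof -
  have "(q t * r t + \<eta>) * (t - s) \<le> qt t * rt t * (t - s)"
    using assms(5,6) by (intro mult_right_mono) auto
  then show ?thesis
    using IC_utility_bounds[OF assms(1,3,4)] IC_utility_bounds[OF assms(2,3,4)]
    by (simp add: algebra_simps)
qed

text \<open>A discretized envelope formula: the steps above are summed along a uniform partition of
  [s, t] into n pieces, and the telescoped error (Q s - Q t)(t - s)/n vanishes as n grows.\<close>

lemma IC_rent_gap_increase:
  assumes ic: "IC tlo thi r q u" "IC tlo thi rt qt ut" and st: "tlo \<le> s" "s \<le> t" "t \<le> thi"
    and gap: "\<forall>x\<in>{s<..t}. \<eta> \<le> qt x * rt x - q x * r x"
  shows "(u s - ut s) + \<eta> * (t - s) \<le> u t - ut t"
proof (cases "s = t")
  case False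
  let ?w = "\<lambda>x. u x - ut x" and ?Q = "\<lambda>x. q x * r x"
  have partition: "?w s + \<eta> * (t - s) \<le> ?w t + (?Q s - ?Q t) * (t - s) / real n"
    if n: "n \<ge> 1" for n :: nat
  proof -
    define h where "h = (t - s) / real n"
    define x where "x i = s + real i * h" for i :: nat
    have h_pos: "0 < h" using n st False unfolding h_def by simp
    have x_ends: "x 0 = s" "x n = t" using n unfolding x_def h_def by auto
    have x_in: "x i \<in> {s..t}" if "i \<le> n" for i
      using mult_right_mono[of "real i" "real n" h] that h_pos x_ends unfolding x_def by auto
    have "(\<Sum>i<n. ?w (x i) - ?w (x (Suc i))) \<le> (\<Sum>i<n. (?Q (x i) - ?Q (x (Suc i))) * h - \<eta> * h)"
    proof (rule sum_mono)
      fix i assume "i \<in> {..<n}"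
      then have "x i \<in> {s..t}" "x (Suc i) \<in> {s..t}" "x i < x (Suc i)" "x (Suc i) - x i = h"
        using x_in[of i] x_in[of "Suc i"] h_pos unfolding x_def by (auto simp: algebra_simps)
      then show "?w (x i) - ?w (x (Suc i)) \<le> (?Q (x i) - ?Q (x (Suc i))) * h - \<eta> * h"
        using IC_rent_gap_step[OF ic, of "x i" "x (Suc i)" \<eta>] gap st by fastforce
    qed
    also have "\<dots> = (\<Sum>i<n. ?Q (x i) - ?Q (x (Suc i))) * h - real n * \<eta> * h"
      by (simp add: sum_subtractf sum_distrib_right[symmetric] left_diff_distrib)
    finally show ?thesis
      using sum_lessThan_telescope'[of "\<lambda>i. ?w (x i)" n] sum_lessThan_telescope'[of "\<lambda>i. ?Q (x i)" n]
        x_ends n unfolding h_def by simp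
  qed
  have "(\<lambda>n. ?w t + (?Q s - ?Q t) * (t - s) / real n) \<longlonglongrightarrow> ?w t"
    using tendsto_add[OF tendsto_const lim_const_over_n] by simp
  then show ?thesis
    by (rule LIMSEQ_le_const) (use partition in auto)
qed simp

lemma continuous_on_zero_at_left_end:
  fixes f :: "real \<Rightarrow> real"
  assumes "continuous_on {a..b} f" "a < b" "\<And>x. x \<in> {a<..b} \<Longrightarrow> f x = 0"
  shows "f a = 0"
proof -
  have "closure {a<..b} \<subseteq> {x \<in> {a..b}. f x = 0}"
    using assms by (intro closure_minimal continuous_closed_preimage_constant) auto
  moreover have "a \<in> closure {a<..b}"
    using assms(2) by simp
  ultimately show ?thesis by blast
qed

definition floor_allocation :: "real \<Rightarrow> real \<Rightarrow> real \<Rightarrow> bool" where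
  "floor_allocation qh \<rho> y \<longleftrightarrow> (qh \<le> y \<and> \<rho> = 1) \<or> (y = qh \<and> 0 < \<rho> \<and> \<rho> < 1) \<or> (y = 0 \<and> \<rho> = 0)"

lemma floor_randomized_allocation:
  assumes "floor_randomized P c tlo thi qbar r q u" "\<theta> \<in> {tlo..thi}"
  shows "floor_allocation (qhat P c) (r \<theta>) (q \<theta>)"
proof -
  from assms(1) obtain T1 T01 T0 where
    "T1 \<union> T01 \<union> T0 = {tlo..thi}"
    "\<forall>\<theta>\<in>T1. q \<theta> \<ge> qhat P c \<and> r \<theta> = 1"
    "\<forall>\<theta>\<in>T01. q \<theta> = qhat P c \<and> 0 < r \<theta> \<and> r \<theta> < 1"
    "\<forall>\<theta>\<in>T0. q \<theta> = 0 \<and> r \<theta> = 0"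
    unfolding floor_randomized_def by blast
  with assms(2) show ?thesis
    unfolding floor_allocation_def by blast
qed

lemma floor_allocation_weighted_mono:
  fixes f :: "real \<Rightarrow> real"
  assumes "0 < qh" "floor_allocation qh \<rho> y" "floor_allocation qh \<rho>' y'"
    and "\<rho> * y \<le> \<rho>' * y'" "y' \<le> Y"
    and f_mono: "\<And>a b. qh \<le> a \<Longrightarrow> a \<le> b \<Longrightarrow> b \<le> Y \<Longrightarrow> f a \<le> f b"
    and "0 \<le> f qh" "f 0 = 0"
  shows "\<rho> * f y \<le> \<rho>' * f y'"
proof -
  have f_nonneg: "0 \<le> f y'"
  proof (cases "y' = 0")
    case False
    then have "f qh \<le> f y'"
      using assms(3,5) f_mono[of qh y'] unfolding floor_allocation_def by auto
    then show ?thesis using assms(7) by simp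
  qed (use assms(8) in simp)
  consider "qh \<le> y" "\<rho> = 1" | "y = qh" "0 < \<rho>" "\<rho> < 1" | "y = 0" "\<rho> = 0"
    using assms(2) unfolding floor_allocation_def by blast
  then show ?thesis
  proof cases
    case 1
    have "\<rho>' = 1"
    proof (rule ccontr)
      assume "\<rho>' \<noteq> 1"
      then have "\<rho>' * y' < qh"
        using assms(1,3) mult_strict_right_mono[of \<rho>' 1 qh] unfolding floor_allocation_def by auto
      then show False using 1 assms(4) by simp
    qed
    moreover have "y \<le> y'" using 1 assms(4) calculation by simp
    ultimately show ?thesis using 1 f_mono assms(5) by simp
  next
    case 2
    then have "0 < \<rho> * y"
      using assms(1) by simp
    then have "0 < \<rho>' * y'"
      using assms(4) by linarith
    then consider "\<rho>' = 1" "qh \<le> y'" | "y' = qh" "\<rho> \<le> \<rho>'"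
      using 2 assms(1,3,4) unfolding floor_allocation_def by auto
    then show ?thesis
    proof cases
      case 1
      then show ?thesis
        using 2 assms(5,7) f_mono[of qh y'] mult_left_le_one_le[of "f qh" \<rho>] by simp
    next
      case 3: 2
      then show ?thesis
        using 2 assms(7) mult_right_mono[of \<rho> \<rho>' "f qh"] by simp
    qed
  qed (use f_nonneg assms(3) in \<open>auto simp: floor_allocation_def\<close>)
qed

locale dominated_floor_randomized = demand P qbar
  for P :: "real \<Rightarrow> real" and qbar :: real +
  fixes c tlo thi \<alpha> :: real and r q u rt qt ut :: "real \<Rightarrow> real"
  assumes tlo_pos: "0 < tlo" and tlo_less_thi: "tlo < thi" and c_pos: "0 < c"
    and thi_less_P0: "thi < P 0" and TS_thi_pos: "0 < TS P c thi (qe P thi)"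
    and alpha_less_1: "\<alpha> < 1"
    and M_floor_randomized: "floor_randomized P c tlo thi qbar r q u"
    and M_left_continuous: "left_continuous tlo thi r q" and M_DD: "DD P tlo thi q"
    and Mt_floor_randomized: "floor_randomized P c tlo thi qbar rt qt ut"
    and Mt_left_continuous: "left_continuous tlo thi rt qt" and Mt_DD: "DD P tlo thi qt"
    and dominates: "dominates P c \<alpha> tlo thi qbar rt qt ut r q u"
begin

abbreviation "qh \<equiv> qhat P c"
abbreviation "Q x \<equiv> q x * r x"
abbreviation "Qt x \<equiv> qt x * rt x"

lemma type_bounds: "\<theta> \<in> {tlo..thi} \<Longrightarrow> 0 \<le> \<theta> \<and> \<theta> < P 0"
  using tlo_pos thi_less_P0 by auto

lemma qh_pos: "0 < qh"
  and qh_zero_profit: "V P qh - qh * P qh = c"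
  using qhat_characterization[OF c_pos, of thi] tlo_pos tlo_less_thi thi_less_P0 TS_thi_pos by auto

lemma TS_qh: "TS P c \<theta> qh = qh * (P qh - \<theta>)"
  using qh_pos qh_zero_profit unfolding TS_def by (simp add: algebra_simps)

lemma IC_mechanisms: "IC tlo thi r q u" "IC tlo thi rt qt ut"
  and u_thi: "u thi = 0" "ut thi = 0"
  using M_floor_randomized Mt_floor_randomized unfolding floor_randomized_def by auto

lemma floor_allocations: "\<theta> \<in> {tlo..thi} \<Longrightarrow> floor_allocation qh (r \<theta>) (q \<theta>)"
  "\<theta> \<in> {tlo..thi} \<Longrightarrow> floor_allocation qh (rt \<theta>) (qt \<theta>)"
  using floor_randomized_allocation M_floor_randomized Mt_floor_randomized by blast+

lemma allocation_ranges: "\<theta> \<in> {tlo..thi} \<Longrightarrow> 0 \<le> r \<theta> \<and> r \<theta> \<le> 1 \<and> 0 \<le> q \<theta>"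
  "\<theta> \<in> {tlo..thi} \<Longrightarrow> 0 \<le> rt \<theta> \<and> rt \<theta> \<le> 1 \<and> 0 \<le> qt \<theta>"
  using M_floor_randomized Mt_floor_randomized unfolding floor_randomized_def mechanism_def by auto

lemma Q_nonneg: "\<theta> \<in> {tlo..thi} \<Longrightarrow> 0 \<le> Q \<theta>" "\<theta> \<in> {tlo..thi} \<Longrightarrow> 0 \<le> Qt \<theta>"
  using allocation_ranges by simp_all

lemma below_qe: "\<theta> \<in> {tlo..thi} \<Longrightarrow> q \<theta> \<le> qe P \<theta>" "\<theta> \<in> {tlo..thi} \<Longrightarrow> qt \<theta> \<le> qe P \<theta>"
  and efficient_at_tlo: "q tlo = qe P tlo" "qt tlo = qe P tlo"
  using M_DD Mt_DD unfolding DD_def by auto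

lemma RS_ge: "\<theta> \<in> {tlo..thi} \<Longrightarrow> RS P c \<alpha> \<theta> r q u \<le> RS P c \<alpha> \<theta> rt qt ut"
  and RS_less: "\<exists>\<theta>\<in>{tlo..thi}. RS P c \<alpha> \<theta> r q u < RS P c \<alpha> \<theta> rt qt ut"
  using dominates unfolding dominates_def by auto

lemma continuous_on_utilities: "continuous_on {tlo..thi} u" "continuous_on {tlo..thi} ut"
  using IC_utility_lipschitz[THEN lipschitz_on_continuous_on] M_floor_randomized
    Mt_floor_randomized IC_mechanisms qbar_pos unfolding floor_randomized_def by auto

text \<open>Where M sells more in expectation, it also generates more surplus, so domination
  can only come from leaving less rent.\<close>

lemma rent_ge_where_Q_greater:
  assumes x: "x \<in> {tlo..thi}" and less: "Qt x < Q x"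
  shows "ut x \<le> u x"
proof -
  have "q x \<noteq> 0"
    using less Q_nonneg(2)[OF x] by auto
  then have q_x: "qh \<le> q x" "q x \<le> qe P x"
    using floor_allocations(1)[OF x] below_qe(1)[OF x] unfolding floor_allocation_def by auto
  have TS_mono': "TS P c x a \<le> TS P c x b" if "qh \<le> a" "a \<le> b" "b \<le> qe P x" for a b
    using that qh_pos type_bounds[OF x] le_P_below_qe by (intro TS_mono) auto
  have TS_qh_nonneg: "0 \<le> TS P c x qh"
    using TS_qh le_P_below_qe[of x qh] q_x qh_pos type_bounds[OF x] by simp
  have TS_0: "TS P c x 0 = 0"
    unfolding TS_def by simp
  have "rt x * qt x \<le> r x * q x"
    using less by (simp add: mult.commute)
  then have "rt x * TS P c x (qt x) \<le> r x * TS P c x (q x)"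
    by (rule floor_allocation_weighted_mono[where f = "TS P c x",
          OF qh_pos floor_allocations(2,1)[OF x] _ q_x(2) TS_mono' TS_qh_nonneg TS_0])
  then have "0 \<le> (1 - \<alpha>) * (u x - ut x)"
    using RS_ge[OF x] unfolding RS_def by (simp add: algebra_simps)
  then show ?thesis
    using alpha_less_1 by (simp add: zero_le_mult_iff)
qed

lemma Q_gap_eventually_left:
  assumes "tlo < \<theta>" "\<theta> \<le> thi" "\<eta> < Qt \<theta> - Q \<theta>"
  shows "\<exists>b<\<theta>. \<forall>y. b < y \<and> y < \<theta> \<longrightarrow> \<eta> < Qt y - Q y"
proof -
  have "continuous (at_left \<theta>) (\<lambda>t. Qt t - Q t)"
    using M_left_continuous Mt_left_continuous assms unfolding left_continuous_def
    by (intro continuous_diff) auto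
  then have "eventually (\<lambda>t. \<eta> < Qt t - Q t) (at_left \<theta>)"
    using assms(3) unfolding continuous_within by (rule order_tendstoD(1))
  then show ?thesis
    unfolding eventually_at_left_field by blast
qed

text \<open>At the lowest type both mechanisms sell the efficient quantity. If M were rationed there
  while M-tilde sold more, M would sit on the floor, which is then qe tlo; all higher types would
  be excluded by both mechanisms and get no rent, and the surplus at tlo would vanish too, so the
  two mechanisms would be surplus-equivalent, contradicting strict domination.\<close>

lemma randomization_eq_at_tlo:
  assumes "Q tlo \<le> Qt tlo"
  shows "r tlo = rt tlo"
proof (rule ccontr)
  assume neq: "r tlo \<noteq> rt tlo"
  have tlo: "tlo \<in> {tlo..thi}"
    using tlo_less_thi by simp
  have qe_tlo: "0 < qe P tlo"
    using qe_pos type_bounds[OF tlo] by auto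
  then have "r tlo < rt tlo"
    using assms neq efficient_at_tlo by simp
  then have q_tlo: "q tlo = qh"
    using floor_allocations(1)[OF tlo] allocation_ranges(2)[OF tlo] efficient_at_tlo qe_tlo
    unfolding floor_allocation_def by auto
  have no_sales: "q x = 0 \<and> r x = 0 \<and> qt x = 0 \<and> rt x = 0" if x: "x \<in> {tlo<..thi}" for x
  proof -
    have "qe P x < qh"
      using qe_less[of tlo x] type_bounds[of x] q_tlo efficient_at_tlo x tlo_pos by auto
    then show ?thesis
      using below_qe[of x] floor_allocations[of x] x unfolding floor_allocation_def by force
  qed
  have no_rent: "u x = 0 \<and> ut x = 0" if x: "x \<in> {tlo<..thi}" for x
    using IC_utility_bounds[OF IC_mechanisms(1), of x thi] IC_utility_bounds[OF IC_mechanisms(2), of x thi]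
      no_sales[OF x] no_sales[of thi] u_thi x tlo_less_thi by auto
  have "u tlo = 0" "ut tlo = 0"
    using continuous_on_zero_at_left_end[OF continuous_on_utilities(1) tlo_less_thi]
      continuous_on_zero_at_left_end[OF continuous_on_utilities(2) tlo_less_thi] no_rent by auto
  moreover have "TS P c tlo qh = 0"
    using TS_qh q_tlo efficient_at_tlo qe_root[of tlo] type_bounds[OF tlo] by simp
  ultimately have "RS P c \<alpha> \<theta> r q u = RS P c \<alpha> \<theta> rt qt ut" if "\<theta> \<in> {tlo..thi}" for \<theta>
    using no_sales no_rent q_tlo efficient_at_tlo that unfolding RS_def
    by (cases "\<theta> = tlo") auto
  then show False
    using RS_less by force
qed

lemma rent_ge_at_tlo:
  assumes "Q tlo \<le> Qt tlo"
  shows "Q tlo = Qt tlo" "ut tlo \<le> u tlo"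
proof -
  have r_tlo: "r tlo = rt tlo"
    by (rule randomization_eq_at_tlo[OF assms])
  then show "Q tlo = Qt tlo"
    using efficient_at_tlo by simp
  have "(1 - \<alpha>) * ut tlo \<le> (1 - \<alpha>) * u tlo"
    using RS_ge[of tlo] r_tlo efficient_at_tlo tlo_less_thi unfolding RS_def by simp
  then show "ut tlo \<le> u tlo"
    using alpha_less_1 by simp
qed

text \<open>The point e is the supremum of the types below \<theta> where M sells more, or tlo if there
  is none; left continuity keeps it strictly below \<theta>.\<close>

lemma exists_rent_ge_below:
  assumes \<theta>: "\<theta> \<in> {tlo..thi}" and gap: "Q \<theta> < Qt \<theta>"
  shows "\<exists>e. tlo \<le> e \<and> e < \<theta> \<and> ut e \<le> u e \<and> (\<forall>x\<in>{e<..\<theta>}. Q x \<le> Qt x)"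
proof -
  define E where "E = {x \<in> {tlo..\<theta>}. Qt x < Q x}"
  show ?thesis
  proof (cases "E = {}")
    case True
    then have "Q tlo \<le> Qt tlo" "\<forall>x\<in>{tlo<..\<theta>}. Q x \<le> Qt x"
      using \<theta> unfolding E_def by auto
    moreover from this have "tlo < \<theta>"
      using rent_ge_at_tlo(1) gap \<theta> by (cases "tlo = \<theta>") auto
    ultimately show ?thesis
      using rent_ge_at_tlo(2) by blast
  next
    case False
    define e where "e = Sup E"
    have bdd: "bdd_above E"
      unfolding E_def by (rule bdd_aboveI[of _ \<theta>]) auto
    have E_sub: "E \<subseteq> {tlo..\<theta>}" "\<theta> \<notin> E"
      using gap unfolding E_def by auto
    obtain x1 where x1: "x1 \<in> E"
      using False by blast
    have e_range: "tlo \<le> e" "e \<le> \<theta>"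
      using cSup_upper[OF x1 bdd] x1 E_sub(1) unfolding e_def by (auto intro!: cSup_least[OF False])
    have above: "\<forall>x\<in>{e<..\<theta>}. Q x \<le> Qt x"
    proof
      fix x assume x: "x \<in> {e<..\<theta>}"
      then have "x \<notin> E"
        using cSup_upper[OF _ bdd, of x] unfolding e_def by force
      then show "Q x \<le> Qt x"
        using x e_range unfolding E_def by auto
    qed
    have "e < \<theta>"
    proof (rule ccontr)
      assume "\<not> e < \<theta>"
      then have e_eq: "e = \<theta>" using e_range by simp
      have "tlo < \<theta>"
        using x1 E_sub by (cases "x1 = \<theta>") auto
      then obtain b where b: "b < \<theta>" "\<forall>y. b < y \<and> y < \<theta> \<longrightarrow> 0 < Qt y - Q y"
        using Q_gap_eventually_left[of \<theta> 0] \<theta> gap by auto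
      obtain y where "y \<in> E" "b < y"
        using less_cSupD[OF False, of b] b e_eq unfolding e_def by auto
      then show False
        using b E_sub unfolding E_def by (cases "y = \<theta>") auto
    qed
    moreover have "ut e \<le> u e"
    proof -
      have "E \<subseteq> {x \<in> {tlo..thi}. ut x \<le> u x}"
        using rent_ge_where_Q_greater \<theta> unfolding E_def by auto
      moreover have "closed {x \<in> {tlo..thi}. ut x \<le> u x}"
        using continuous_on_utilities by (intro continuous_on_closed_Collect_le) auto
      ultimately have "closure E \<subseteq> {x \<in> {tlo..thi}. ut x \<le> u x}"
        by (rule closure_minimal)
      then show ?thesis
        using closure_contains_Sup[OF False bdd] unfolding e_def by auto
    qed
    ultimately show ?thesis
      using e_range above by blast
  qed
qed

end

theorem lemma8:
  fixes tlo thi c qbar \<alpha> :: real and P :: "real \<Rightarrow> real"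
    and r q u rt qt ut :: "real \<Rightarrow> real"
  assumes "0 < tlo" "tlo < thi" "c > 0" "qbar > 0"
    and "continuous_on {0..} P"
    and "\<forall>x\<in>{0..}. \<forall>y\<in>{0..}. x < y \<longrightarrow> P y < P x"
    and "P qbar = 0"
    and "thi < P 0"
    and "TS P c thi (qe P thi) > 0"
    and "0 \<le> \<alpha>" "\<alpha> < 1"
    and "floor_randomized P c tlo thi qbar r q u"
    and "left_continuous tlo thi r q" "DD P tlo thi q"
    and "floor_randomized P c tlo thi qbar rt qt ut"
    and "left_continuous tlo thi rt qt" "DD P tlo thi qt"
    and "dominates P c \<alpha> tlo thi qbar rt qt ut r q u"
  shows "\<forall>\<theta>\<in>{\<theta>\<in>{tlo..thi}. qt \<theta> * rt \<theta> > q \<theta> * r \<theta>}. u \<theta> > ut \<theta>"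
proof
  interpret dominated_floor_randomized P qbar c tlo thi \<alpha> r q u rt qt ut
    by unfold_locales (use assms in auto)
  fix \<theta> assume "\<theta> \<in> {\<theta>\<in>{tlo..thi}. qt \<theta> * rt \<theta> > q \<theta> * r \<theta>}"
  then have \<theta>: "\<theta> \<in> {tlo..thi}" and gap: "q \<theta> * r \<theta> < qt \<theta> * rt \<theta>"
    by auto
  obtain e where e: "tlo \<le> e" "e < \<theta>" "ut e \<le> u e" "\<forall>x\<in>{e<..\<theta>}. q x * r x \<le> qt x * rt x"
    using exists_rent_ge_below[OF \<theta> gap] by blast
  define \<eta> where "\<eta> = (qt \<theta> * rt \<theta> - q \<theta> * r \<theta>) / 2"
  have \<eta>: "0 < \<eta>" "\<eta> < qt \<theta> * rt \<theta> - q \<theta> * r \<theta>"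
    using gap unfolding \<eta>_def by auto
  obtain b where b: "b < \<theta>" "\<forall>y. b < y \<and> y < \<theta> \<longrightarrow> \<eta> < qt y * rt y - q y * r y"
    using Q_gap_eventually_left[of \<theta> \<eta>] e \<theta> \<eta> by force
  define m where "m = max e b"
  have "u e - ut e + 0 * (m - e) \<le> u m - ut m"
    using e \<theta> b by (intro IC_rent_gap_increase[OF IC_mechanisms]) (auto simp: m_def)
  moreover have "\<forall>x\<in>{m<..\<theta>}. \<eta> \<le> qt x * rt x - q x * r x"
    using b \<eta> by (force simp: m_def less_eq_real_def)
  then have "u m - ut m + \<eta> * (\<theta> - m) \<le> u \<theta> - ut \<theta>"
    using e \<theta> b by (intro IC_rent_gap_increase[OF IC_mechanisms]) (auto simp: m_def)
  moreover have "0 < \<eta> * (\<theta> - m)"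
    using \<eta> e b by (simp add: m_def)
  ultimately show "u \<theta> > ut \<theta>"
    using e by linarith
qed

end
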